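(* Let $R$ be a commutative ring, $M$ an $R$-module and $(I,N)$ a prime m-ideal of $M$. Then $I=\{r\in R\mid r M\subseteq N\}$.
   Context: An m-ideal of an $R$-module $M$ is a pair $(I,N)$ with $I$ an ideal of $R$ and $N$ a submodule of $M$ such that $I\cdot M\subseteq N$. It is prime if $I$ is a prime (in particular proper) ideal of $R$, $N$ is a proper submodule of $M$, and for all $r\in R$, $m\in M$, $r\cdot m\in N$ implies $r\in I$ or $m\in N$. *)

theory Defs
  imports "HOL-Algebra.Module" "HOL-Algebra.Ideal"
begin

definition m_ideal :: "('a, 'c) ring_scheme \<Rightarrow> ('a, 'b, 'd) module_scheme \<Rightarrow> 'a set \<Rightarrow> 'b set \<Rightarrow> bool" where
  "m_ideal R M I N \<longleftrightarrow> ideal I R \<and> submodule N R M \<and>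
     (\<forall>r\<in>I. \<forall>m\<in>carrier M. r \<odot>\<^bsub>M\<^esub> m \<in> N)"

definition prime_m_ideal :: "('a, 'c) ring_scheme \<Rightarrow> ('a, 'b, 'd) module_scheme \<Rightarrow> 'a set \<Rightarrow> 'b set \<Rightarrow> bool" where
  "prime_m_ideal R M I N \<longleftrightarrow> m_ideal R M I N \<and> primeideal I R \<and> N \<noteq> carrier M \<and>
     (\<forall>r\<in>carrier R. \<forall>m\<in>carrier M. r \<odot>\<^bsub>M\<^esub> m \<in> N \<longrightarrow> r \<in> I \<or> m \<in> N)"

end

theory Submission
  imports Defs
begin

lemma m_ideal_subset_annihilator:
  assumes "m_ideal R M I N"
  shows "I \<subseteq> {r \<in> carrier R. \<forall>m\<in>carrier M. r \<odot>\<^bsub>M\<^esub> m \<in> N}"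
proof -
  have "ideal I R" and annihilates: "\<forall>r\<in>I. \<forall>m\<in>carrier M. r \<odot>\<^bsub>M\<^esub> m \<in> N"
    using assms unfolding m_ideal_def by auto
  then have "I \<subseteq> carrier R"
    by (simp add: ideal.axioms(1) additive_subgroup.a_subset)
  with annihilates show ?thesis by auto
qed

text \<open>Test the primality condition on a single element lying outside the proper submodule \<open>N\<close>.\<close>

lemma prime_m_ideal_annihilator_subset:
  assumes "module R M" and "prime_m_ideal R M I N"
  shows "{r \<in> carrier R. \<forall>m\<in>carrier M. r \<odot>\<^bsub>M\<^esub> m \<in> N} \<subseteq> I"
proof -
  have "submodule N R M" and proper: "N \<noteq> carrier M"
    and prime: "\<forall>r\<in>carrier R. \<forall>m\<in>carrier M. r \<odot>\<^bsub>M\<^esub> m \<in> N \<longrightarrow> r \<in> I \<or> m \<in> N"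
    using assms(2) unfolding prime_m_ideal_def m_ideal_def by auto
  then have "N \<subseteq> carrier M"
    using module.submoduleE(1)[OF assms(1)] by blast
  with proper obtain m where "m \<in> carrier M" "m \<notin> N" by blast
  with prime show ?thesis by blast
qed

theorem mainTheorem18:
  fixes R (structure) and M (structure)
  assumes "module R M"
    and "prime_m_ideal R M I N"
  shows "I = {r \<in> carrier R. \<forall>m\<in>carrier M. r \<odot>\<^bsub>M\<^esub> m \<in> N}"
proof
  show "I \<subseteq> {r \<in> carrier R. \<forall>m\<in>carrier M. r \<odot>\<^bsub>M\<^esub> m \<in> N}"
    using assms(2) m_ideal_subset_annihilator unfolding prime_m_ideal_def by blast
  show "{r \<in> carrier R. \<forall>m\<in>carrier M. r \<odot>\<^bsub>M\<^esub> m \<in> N} \<subseteq> I"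
    using prime_m_ideal_annihilator_subset[OF assms] .
qed

end
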